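(* Let $\mu$ be a centered log-concave probability measure on $\mathbb{R}^n$, and let $A\subset\mathbb{R}^n$ be a convex body with $rB_2^n\subseteq A$ for some $r>0$. Then $$\mu^+(\partial A)\leq \frac{2n\,\mu(A)}{r}.$$
   Context: A probability measure on $\mathbb{R}^n$ is log-concave (full-dimensional) if it has a density $f$ with $\ln f$ concave; centered means its barycenter is $0$. A convex body is a compact convex set with nonempty interior; $B_2^n$ is the Euclidean unit ball. $\mu^+(\partial A)=\liminf_{\epsilon\to0^+}\frac{\mu((A+\epsilon B_2^n)\setminus A)}{\epsilon}$. *)

theory Defs
  imports "HOL-Analysis.Analysis"
begin

text \<open>Log-concave density: f \<ge> 0 and ln f concave (with ln 0 = -\<infinity>), i.e.
  f((1-t)x + t y) \<ge> f(x)^(1-t) f(y)^t for 0 < t < 1.\<close>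
definition log_concave_fun :: "('a::real_vector \<Rightarrow> real) \<Rightarrow> bool" where
  "log_concave_fun f \<longleftrightarrow> (\<forall>x. 0 \<le> f x) \<and>
     (\<forall>x y. \<forall>t\<in>{0<..<1}. f x powr (1 - t) * f y powr t \<le> f ((1 - t) *\<^sub>R x + t *\<^sub>R y))"

definition centered_log_concave_density :: "('a::euclidean_space \<Rightarrow> real) \<Rightarrow> bool" where
  "centered_log_concave_density f \<longleftrightarrow>
     f \<in> borel_measurable borel \<and> log_concave_fun f \<and>
     (\<integral>\<^sup>+x. ennreal (f x) \<partial>lborel) = 1 \<and>
     has_bochner_integral lborel (\<lambda>x. f x *\<^sub>R x) 0"

definition convex_body :: "'a::euclidean_space set \<Rightarrow> bool" where
  "convex_body A \<longleftrightarrow> compact A \<and> convex A \<and> interior A \<noteq> {}"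

definition boundary_measure :: "'a::euclidean_space measure \<Rightarrow> 'a set \<Rightarrow> ereal" where
  "boundary_measure M A = Liminf (at_right 0)
     (\<lambda>e. ereal (measure M ({a + e *\<^sub>R b | a b. a \<in> A \<and> b \<in> cball 0 1} - A) / e))"

end

theory Submission
  imports Defs "HOL-Probability.Probability_Measure"
begin

text \<open>Put \<open>s = 1 + e / r\<close>. Since \<open>A\<close> is convex and contains \<open>r B\<close>, both \<open>A + e B\<close> and \<open>A\<close>
  lie in \<open>s A\<close>, so \<open>\<mu>((A + e B) - A) \<le> \<mu>(s A) - \<mu>(A)\<close>. Log-concavity on the segment from \<open>0\<close>
  to \<open>s y\<close>, combined with Fradelizi's inequality \<open>f \<le> e\<^sup>n f(0)\<close>, gives
  \<open>f(s y) \<le> e\<^bsup>n (s - 1)\<^esup> f(y)\<close>; after the change of variables \<open>x = s y\<close> this yields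
  \<open>\<mu>(s A) \<le> s\<^sup>n e\<^bsup>n (s - 1)\<^esup> \<mu>(A)\<close>, and the right-hand side has derivative \<open>2 n \<mu>(A) / r\<close> at \<open>e = 0\<close>.
  Fradelizi's inequality itself follows by integrating
  \<open>f(t z + (1 - t) x) \<ge> (f(z) / f(0))\<^sup>t f(x) (1 - t \<langle>h, x\<rangle>)\<close> over \<open>x\<close>, where \<open>h\<close> is a
  supergradient of \<open>ln f\<close> at the barycenter \<open>0\<close>, and letting \<open>t \<rightarrow> 0\<close>.\<close>

lemma nn_integral_affine:
  fixes t :: "'a::euclidean_space" and g :: "'a \<Rightarrow> ennreal"
  assumes [measurable]: "g \<in> borel_measurable borel" and c: "c \<noteq> 0"
  shows "(\<integral>\<^sup>+x. g x \<partial>lborel) = ennreal (\<bar>c\<bar> ^ DIM('a)) * (\<integral>\<^sup>+x. g (t + c *\<^sub>R x) \<partial>lborel)"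
  by (subst lborel_affine[OF c, of t])
     (simp add: nn_integral_density nn_integral_distr nn_integral_cmult)

lemma integral_le_nn_integral:
  fixes k :: "'b \<Rightarrow> real"
  assumes "integrable M k"
  shows "ennreal (integral\<^sup>L M k) \<le> (\<integral>\<^sup>+x. ennreal (k x) \<partial>M)"
proof -
  have int_pos: "integrable M (\<lambda>x. max 0 (k x))" using assms by auto
  have "ennreal (integral\<^sup>L M k) \<le> ennreal (integral\<^sup>L M (\<lambda>x. max 0 (k x)))"
    using assms int_pos by (intro ennreal_leI integral_mono) auto
  also have "\<dots> = (\<integral>\<^sup>+x. ennreal (max 0 (k x)) \<partial>M)"
    using int_pos by (subst nn_integral_eq_integral) auto
  also have "\<dots> = (\<integral>\<^sup>+x. ennreal (k x) \<partial>M)"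
    by (intro nn_integral_cong) (auto simp: max_def ennreal_neg)
  finally show ?thesis .
qed

lemma log_concave_fun_nonneg: "log_concave_fun f \<Longrightarrow> 0 \<le> f x"
  by (simp add: log_concave_fun_def)

lemma log_concave_funD_ln:
  assumes "log_concave_fun f" "0 < f x" "0 < f y" "0 \<le> a" "0 \<le> b" "a + b = 1"
  shows "0 < f (a *\<^sub>R x + b *\<^sub>R y)" and "a * ln (f x) + b * ln (f y) \<le> ln (f (a *\<^sub>R x + b *\<^sub>R y))"
proof -
  have "0 < f (a *\<^sub>R x + b *\<^sub>R y) \<and> a * ln (f x) + b * ln (f y) \<le> ln (f (a *\<^sub>R x + b *\<^sub>R y))"
  proof (cases "a = 0 \<or> b = 0")
    case True
    then show ?thesis using assms by auto
  next
    case False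
    then have b: "b \<in> {0<..<1}" and a: "a = 1 - b" using assms by auto
    have le: "f x powr a * f y powr b \<le> f (a *\<^sub>R x + b *\<^sub>R y)"
      using assms(1) b unfolding a log_concave_fun_def by blast
    have pos: "0 < f x powr a * f y powr b" using assms by simp
    have "a * ln (f x) + b * ln (f y) = ln (f x powr a * f y powr b)"
      using assms by (simp add: ln_mult)
    also have "\<dots> \<le> ln (f (a *\<^sub>R x + b *\<^sub>R y))" using le pos by simp
    finally show ?thesis using le pos by simp
  qed
  then show "0 < f (a *\<^sub>R x + b *\<^sub>R y)" "a * ln (f x) + b * ln (f y) \<le> ln (f (a *\<^sub>R x + b *\<^sub>R y))"
    by auto
qed

lemma convex_log_concave_support: "log_concave_fun f \<Longrightarrow> convex {x. 0 < f x}"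
  unfolding convex_def using log_concave_funD_ln(1) by blast

lemma convex_log_concave_strict_hypograph:
  assumes lc: "log_concave_fun f"
  shows "convex {(x, u). 0 < f x \<and> u < ln (f x) - c}"
  unfolding convex_def
proof clarsimp
  fix x y u v and a b :: real
  assume x: "0 < f x" "u < ln (f x) - c" and y: "0 < f y" "v < ln (f y) - c"
    and ab: "0 \<le> a" "0 \<le> b" "a + b = 1"
  have "a * u + b * v < a * (ln (f x) - c) + b * (ln (f y) - c)"
  proof (cases "a = 0")
    case False
    then have "a * u < a * (ln (f x) - c)" using ab x by simp
    moreover have "b * v \<le> b * (ln (f y) - c)" using ab y by (simp add: mult_left_mono)
    ultimately show ?thesis by simp
  qed (use ab y in simp)
  also have "\<dots> = a * ln (f x) + b * ln (f y) - (a + b) * c"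
    by (simp add: algebra_simps)
  also have "\<dots> \<le> ln (f (a *\<^sub>R x + b *\<^sub>R y)) - c"
    using log_concave_funD_ln(2)[OF lc x(1) y(1) ab] ab(3) by simp
  finally show "0 < f (a *\<^sub>R x + b *\<^sub>R y) \<and> a * u + b * v < ln (f (a *\<^sub>R x + b *\<^sub>R y)) - c"
    using log_concave_funD_ln(1)[OF lc x(1) y(1) ab] by simp
qed

lemma centered_density_meets_open_halfspaces:
  fixes f :: "'a::euclidean_space \<Rightarrow> real"
  assumes [measurable]: "f \<in> borel_measurable borel" and nonneg: "\<And>x. 0 \<le> f x"
    and mass: "(\<integral>\<^sup>+x. ennreal (f x) \<partial>lborel) \<noteq> 0"
    and centered: "has_bochner_integral lborel (\<lambda>x. f x *\<^sub>R x) 0"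
    and "g \<noteq> 0"
  shows "\<exists>x. 0 < f x \<and> g \<bullet> x < 0"
proof (rule ccontr)
  assume contra: "\<not> ?thesis"
  have halfspace: "0 \<le> g \<bullet> (f x *\<^sub>R x)" for x
  proof (cases "0 < f x")
    case True
    then have "0 \<le> g \<bullet> x" using contra not_less by blast
    with True show ?thesis by simp
  qed (use nonneg[of x] in simp)
  have int: "integrable lborel (\<lambda>x. f x *\<^sub>R x)" and "integral\<^sup>L lborel (\<lambda>x. f x *\<^sub>R x) = 0"
    using centered by (auto simp: has_bochner_integral_iff)
  then have "integral\<^sup>L lborel (\<lambda>x. g \<bullet> (f x *\<^sub>R x)) = 0"
    by (subst integral_inner_right[OF int]) simp
  then have "AE x in lborel. g \<bullet> (f x *\<^sub>R x) = 0"
    using integral_nonneg_eq_0_iff_AE[OF integrable_inner_right[OF int]] halfspace by simp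
  moreover have "{x. g \<bullet> x = 0} \<in> null_sets lborel"
    using negligible_hyperplane[of g 0] \<open>g \<noteq> 0\<close>
    by (simp add: negligible_iff_null_sets null_sets_completion_iff[symmetric])
  then have "AE x in lborel. g \<bullet> x \<noteq> 0"
    by (rule AE_I') auto
  ultimately have "AE x in lborel. ennreal (f x) = 0"
    by eventually_elim auto
  then show False
    using mass by (simp add: nn_integral_0_iff_AE)
qed

lemma log_concave_fun_pos_0:
  fixes f :: "'a::euclidean_space \<Rightarrow> real"
  assumes "log_concave_fun f" and "\<And>g. g \<noteq> 0 \<Longrightarrow> \<exists>x. 0 < f x \<and> g \<bullet> x < 0"
  shows "0 < f 0"
proof (rule ccontr)
  assume "\<not> 0 < f 0"
  then obtain g where "g \<noteq> 0" "\<forall>x\<in>{x. 0 < f x}. 0 \<le> g \<bullet> x"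
    using separating_hyperplane_set_0[OF convex_log_concave_support[OF assms(1)]] by auto
  with assms(2) show False by force
qed

text \<open>A supporting hyperplane of the convex hypograph of \<open>ln f\<close> at \<open>0\<close>; it is not vertical because
  the support of \<open>f\<close> lies in no closed half-space through the origin.\<close>
lemma log_concave_fun_le_exp_linear:
  fixes f :: "'a::euclidean_space \<Rightarrow> real"
  assumes lc: "log_concave_fun f" and meets: "\<And>g. g \<noteq> 0 \<Longrightarrow> \<exists>x. 0 < f x \<and> g \<bullet> x < 0"
  obtains h where "\<And>x. f x \<le> f 0 * exp (h \<bullet> x)"
proof -
  have pos: "0 < f 0" using log_concave_fun_pos_0[OF assms] .
  define H where "H = {(x, u). 0 < f x \<and> u < ln (f x) - ln (f 0)}"
  have "convex H" unfolding H_def by (rule convex_log_concave_strict_hypograph[OF lc])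
  moreover have "0 \<notin> H" unfolding H_def by (auto simp: zero_prod_def)
  ultimately obtain p where p: "p \<noteq> 0" "\<forall>z\<in>H. 0 \<le> p \<bullet> z"
    using separating_hyperplane_set_0 by blast
  obtain g c where gc: "p = (g, c)" by (cases p)
  have sep: "0 \<le> g \<bullet> x + c * u" if "0 < f x" "u < ln (f x) - ln (f 0)" for x u
    using p(2) that gc unfolding H_def by auto
  have "c \<le> 0" using sep[of 0 "-1"] pos by simp
  moreover have "c \<noteq> 0"
  proof
    assume "c = 0"
    then have "g \<noteq> 0" using p(1) gc by (simp add: zero_prod_def)
    then obtain x where "0 < f x" "g \<bullet> x < 0" using meets by blast
    with sep[of x "ln (f x) - ln (f 0) - 1"] \<open>c = 0\<close> show False by simp
  qed
  ultimately have "c < 0" by simp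
  define h where "h = (- 1 / c) *\<^sub>R g"
  have "f x \<le> f 0 * exp (h \<bullet> x)" for x
  proof (cases "0 < f x")
    case False
    then show ?thesis using log_concave_fun_nonneg[OF lc, of x] pos by simp
  next
    case True
    have "ln (f x) - ln (f 0) \<le> h \<bullet> x"
    proof (rule dense_le)
      fix u assume "u < ln (f x) - ln (f 0)"
      from sep[OF True this] have "- c * u \<le> g \<bullet> x" by simp
      then show "u \<le> h \<bullet> x"
        using \<open>c < 0\<close> unfolding h_def by (simp add: field_simps)
    qed
    then have "exp (ln (f x)) \<le> exp (ln (f 0) + h \<bullet> x)" by simp
    then show ?thesis using True pos by (simp add: exp_add)
  qed
  then show ?thesis using that by blast
qed

lemma centered_log_concave_density_meets_open_halfspaces:
  assumes "centered_log_concave_density f" and "g \<noteq> 0"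
  shows "\<exists>x. 0 < f x \<and> g \<bullet> x < 0"
  using assms centered_density_meets_open_halfspaces[of f g] log_concave_fun_nonneg[of f]
  by (auto simp: centered_log_concave_density_def)

lemma centered_log_concave_density_pos_0:
  "centered_log_concave_density f \<Longrightarrow> 0 < f 0"
  using log_concave_fun_pos_0 centered_log_concave_density_meets_open_halfspaces
  by (auto simp: centered_log_concave_density_def)

lemma log_concave_fun_ge_linearization:
  fixes f :: "'a::real_inner \<Rightarrow> real"
  assumes lc: "log_concave_fun f" and pos: "0 < f 0" and h: "\<And>x. f x \<le> f 0 * exp (h \<bullet> x)"
    and t: "0 < t" "t < 1"
  shows "(f z / f 0) powr t * (f x * (1 - t * (h \<bullet> x))) \<le> f (t *\<^sub>R z + (1 - t) *\<^sub>R x)"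
proof (cases "0 < f x")
  case False
  then show ?thesis using log_concave_fun_nonneg[OF lc] by (simp add: antisym_conv2)
next
  case True
  have "(f 0 * exp (h \<bullet> x)) powr (- t) \<le> f x powr (- t)"
    using h[of x] True t by (intro powr_mono2') auto
  then have "f 0 powr (- t) * exp (- t * (h \<bullet> x)) \<le> f x powr (- t)"
    using pos by (simp add: powr_mult exp_powr_real mult.commute)
  moreover have "1 - t * (h \<bullet> x) \<le> exp (- t * (h \<bullet> x))"
    using exp_ge_add_one_self[of "- t * (h \<bullet> x)"] by simp
  ultimately have key: "f 0 powr (- t) * (1 - t * (h \<bullet> x)) \<le> f x powr (- t)"
    by (meson mult_left_mono order_trans powr_ge_zero)
  have "(f z / f 0) powr t * (f x * (1 - t * (h \<bullet> x)))
      = f z powr t * f x * (f 0 powr (- t) * (1 - t * (h \<bullet> x)))"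
    using pos log_concave_fun_nonneg[OF lc, of z] by (simp add: powr_divide powr_minus field_simps)
  also have "\<dots> \<le> f z powr t * f x * f x powr (- t)"
    using key True by (intro mult_left_mono) auto
  also have "\<dots> = f x powr (1 - t) * f z powr t"
    using True by (simp add: powr_diff powr_minus divide_inverse)
  also have "\<dots> \<le> f ((1 - t) *\<^sub>R x + t *\<^sub>R z)"
    using lc t unfolding log_concave_fun_def by auto
  finally show ?thesis by (simp add: add.commute)
qed

text \<open>Integrating the linearized bound, the linear term drops out because the barycenter is \<open>0\<close>,
  while the right-hand side integrates to \<open>(1 - t) powr - n\<close>.\<close>
lemma centered_log_concave_density_ratio_powr_le:
  fixes f :: "'a::euclidean_space \<Rightarrow> real"
  assumes cld: "centered_log_concave_density f" and t: "0 < t" "t < 1"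
  shows "(1 - t) ^ DIM('a) * (f z / f 0) powr t \<le> 1"
proof -
  have [measurable]: "f \<in> borel_measurable borel" and lc: "log_concave_fun f"
    and mass: "(\<integral>\<^sup>+x. ennreal (f x) \<partial>lborel) = 1"
    and centered: "has_bochner_integral lborel (\<lambda>x. f x *\<^sub>R x) 0"
    using cld by (auto simp: centered_log_concave_density_def)
  have pos: "0 < f 0" using centered_log_concave_density_pos_0[OF cld] .
  obtain h where h: "\<And>x. f x \<le> f 0 * exp (h \<bullet> x)"
    using log_concave_fun_le_exp_linear[OF lc centered_log_concave_density_meets_open_halfspaces[OF cld]]
    by blast
  define K where "K = (f z / f 0) powr t"
  have int_f: "integrable lborel f"
    using mass by (intro integrableI_nn_integral_finite[where x=1]) (auto simp: log_concave_fun_nonneg[OF lc])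
  have "integral\<^sup>L lborel f = 1"
    using mass int_f by (subst (asm) nn_integral_eq_integral) (auto simp: log_concave_fun_nonneg[OF lc])
  moreover have int_lin: "integrable lborel (\<lambda>x. h \<bullet> (f x *\<^sub>R x))"
    using centered by (intro integrable_inner_right) (auto simp: has_bochner_integral_iff)
  moreover have "integral\<^sup>L lborel (\<lambda>x. h \<bullet> (f x *\<^sub>R x)) = 0"
    using centered by (subst integral_inner_right) (auto simp: has_bochner_integral_iff)
  ultimately have "ennreal K = ennreal (integral\<^sup>L lborel (\<lambda>x. K * (f x - t * (h \<bullet> (f x *\<^sub>R x)))))"
    using int_f by simp
  also have "\<dots> \<le> (\<integral>\<^sup>+x. ennreal (K * (f x - t * (h \<bullet> (f x *\<^sub>R x)))) \<partial>lborel)"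
    using int_f int_lin by (intro integral_le_nn_integral) auto
  also have "\<dots> \<le> (\<integral>\<^sup>+x. ennreal (f (t *\<^sub>R z + (1 - t) *\<^sub>R x)) \<partial>lborel)"
    using log_concave_fun_ge_linearization[OF lc pos h t, of z]
    by (intro nn_integral_mono ennreal_leI) (simp add: K_def algebra_simps)
  finally have "ennreal ((1 - t) ^ DIM('a)) * ennreal K
      \<le> ennreal (\<bar>1 - t\<bar> ^ DIM('a)) * (\<integral>\<^sup>+x. ennreal (f (t *\<^sub>R z + (1 - t) *\<^sub>R x)) \<partial>lborel)"
    using t by (simp add: mult_left_mono)
  also have "\<dots> = 1"
    using mass nn_integral_affine[of "\<lambda>x. ennreal (f x)" "1 - t" "t *\<^sub>R z"] t by simp
  finally show ?thesis
    using t by (simp add: K_def ennreal_mult[symmetric])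
qed

text \<open>Fradelizi's inequality \<open>f \<le> e\<^sup>n f(0)\<close>: let \<open>t \<rightarrow> 0\<close> in the previous bound, using
  \<open>- ln (1 - t) \<le> t / (1 - t)\<close>.\<close>
lemma centered_log_concave_density_le_exp_dim:
  fixes f :: "'a::euclidean_space \<Rightarrow> real"
  assumes cld: "centered_log_concave_density f"
  shows "f z \<le> exp (real DIM('a)) * f 0"
proof (cases "0 < f z")
  case False
  have "0 < exp (real DIM('a)) * f 0" using centered_log_concave_density_pos_0[OF cld] by simp
  with False show ?thesis by linarith
next
  case True
  have pos: "0 < f 0" using centered_log_concave_density_pos_0[OF cld] .
  define n where "n = real DIM('a)"
  define L where "L = ln (f z / f 0)"
  have "L \<le> n / (1 - t)" if t: "0 < t" "t < 1" for t
  proof -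
    have "ln ((1 - t) ^ DIM('a) * (f z / f 0) powr t) \<le> 0"
      using centered_log_concave_density_ratio_powr_le[OF cld t, of z] t True pos by simp
    then have "t * L \<le> n * - ln (1 - t)"
      using t True pos by (simp add: L_def n_def ln_mult ln_realpow)
    also have "\<dots> \<le> n * (t / (1 - t))"
      using t ln_le_minus_one[of "1 / (1 - t)"] by (intro mult_left_mono) (auto simp: n_def ln_div field_simps)
    finally have "t * L \<le> t * (n / (1 - t))" by (simp add: mult.commute)
    then show ?thesis using t(1) mult_le_cancel_left_pos by blast
  qed
  then have "L \<le> n"
    by (intro tendsto_lowerbound[of "\<lambda>t. n / (1 - t)" n "at_right 0"])
       (auto intro!: tendsto_eq_intros eventually_at_rightI[of 0 1])
  then have "ln (f z) \<le> n + ln (f 0)"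
    using True pos by (simp add: L_def ln_div)
  then have "exp (ln (f z)) \<le> exp (n + ln (f 0))"
    by simp
  then show ?thesis
    using True pos by (simp add: n_def exp_add)
qed

lemma log_concave_fun_scaleR_le:
  fixes f :: "'a::real_vector \<Rightarrow> real"
  assumes lc: "log_concave_fun f" and bound: "\<And>x. f x \<le> exp c * f 0" and s: "1 \<le> s"
  shows "f (s *\<^sub>R y) \<le> exp (c * (s - 1)) * f y"
proof (cases "0 < f (s *\<^sub>R y)")
  case False
  then show ?thesis using log_concave_fun_nonneg[OF lc, of y] by (simp add: not_less order_trans)
next
  case True
  have "0 < exp c * f 0"
    using True bound[of "s *\<^sub>R y"] by linarith
  then have pos: "0 < f 0"
    by (simp add: zero_less_mult_iff)
  have y: "(1 - 1 / s) *\<^sub>R 0 + (1 / s) *\<^sub>R (s *\<^sub>R y) = y" using s by simp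
  have weights: "0 \<le> 1 - 1 / s" "0 \<le> 1 / s" "(1 - 1 / s) + 1 / s = 1" using s by auto
  have fy: "0 < f y"
    using log_concave_funD_ln(1)[OF lc pos True weights] y by simp
  have "(1 - 1 / s) * ln (f 0) + (1 / s) * ln (f (s *\<^sub>R y)) \<le> ln (f y)"
    using log_concave_funD_ln(2)[OF lc pos True weights] y by simp
  then have "(s - 1) * ln (f 0) + ln (f (s *\<^sub>R y)) \<le> s * ln (f y)"
    using s by (simp add: field_simps)
  moreover have "ln (f y) \<le> ln (exp c * f 0)"
    using bound[of y] fy pos by simp
  then have "ln (f y) \<le> c + ln (f 0)"
    using pos by (simp add: ln_mult)
  then have "(s - 1) * ln (f y) \<le> (s - 1) * (c + ln (f 0))"
    using s by (intro mult_left_mono) auto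
  ultimately have "ln (f (s *\<^sub>R y)) \<le> c * (s - 1) + ln (f y)"
    by (simp add: algebra_simps)
  then have "exp (ln (f (s *\<^sub>R y))) \<le> exp (c * (s - 1) + ln (f y))"
    by simp
  then show ?thesis using True fy by (simp add: exp_add)
qed

lemma sets_borel_scaleR_image:
  fixes A :: "'a::euclidean_space set"
  assumes "A \<in> sets borel" and "s \<noteq> 0"
  shows "(\<lambda>x. s *\<^sub>R x) ` A \<in> sets borel"
proof -
  have "(\<lambda>x. s *\<^sub>R x) ` A = (\<lambda>x. inverse s *\<^sub>R x) -` A"
    using assms(2) by (force simp: image_iff)
  moreover have "(\<lambda>x::'a. inverse s *\<^sub>R x) \<in> borel_measurable borel"
    by (rule borel_measurable_scaleR) simp_all
  ultimately show ?thesis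
    using measurable_sets_borel assms(1) by metis
qed

lemma emeasure_density_scaleR_le:
  fixes g :: "'a::euclidean_space \<Rightarrow> real"
  assumes [measurable]: "g \<in> borel_measurable borel" "A \<in> sets borel"
    and s: "0 < s" and C: "0 \<le> C" and bound: "\<And>y. g (s *\<^sub>R y) \<le> C * g y"
  shows "emeasure (density lborel (\<lambda>x. ennreal (g x))) ((\<lambda>x. s *\<^sub>R x) ` A)
    \<le> ennreal (s ^ DIM('a) * C) * emeasure (density lborel (\<lambda>x. ennreal (g x))) A"
proof -
  have [measurable]: "(\<lambda>x. s *\<^sub>R x) ` A \<in> sets borel"
    using sets_borel_scaleR_image[OF assms(2)] s by simp
  have indicator_eq: "indicator ((\<lambda>x. s *\<^sub>R x) ` A) (s *\<^sub>R y) = (indicator A y :: ennreal)" for y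
    using s by (auto simp: indicator_def)
  have "emeasure (density lborel (\<lambda>x. ennreal (g x))) ((\<lambda>x. s *\<^sub>R x) ` A)
      = (\<integral>\<^sup>+x. ennreal (g x) * indicator ((\<lambda>x. s *\<^sub>R x) ` A) x \<partial>lborel)"
    by (simp add: emeasure_density)
  also have "\<dots> = ennreal (s ^ DIM('a)) * (\<integral>\<^sup>+y. ennreal (g (s *\<^sub>R y)) * indicator A y \<partial>lborel)"
    using nn_integral_affine[of "\<lambda>x. ennreal (g x) * indicator ((\<lambda>x. s *\<^sub>R x) ` A) x" s 0] s
    by (simp add: indicator_eq)
  also have "\<dots> \<le> ennreal (s ^ DIM('a)) * (\<integral>\<^sup>+y. ennreal C * (ennreal (g y) * indicator A y) \<partial>lborel)"
    using bound C by (intro mult_left_mono nn_integral_mono)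
       (auto simp: indicator_def ennreal_mult'[symmetric] intro: ennreal_leI)
  also have "\<dots> = ennreal (s ^ DIM('a) * C) * emeasure (density lborel (\<lambda>x. ennreal (g x))) A"
    using s C by (simp add: emeasure_density nn_integral_cmult ennreal_mult mult.assoc)
  finally show ?thesis .
qed

lemma centered_log_concave_density_prob_space:
  assumes "centered_log_concave_density f"
  shows "prob_space (density lborel (\<lambda>x. ennreal (f x)))"
proof (rule prob_spaceI)
  have [measurable]: "f \<in> borel_measurable borel" and "(\<integral>\<^sup>+x. ennreal (f x) \<partial>lborel) = 1"
    using assms by (auto simp: centered_log_concave_density_def)
  then show "emeasure (density lborel (\<lambda>x. ennreal (f x))) (space (density lborel (\<lambda>x. ennreal (f x)))) = 1"
    by (simp add: emeasure_density)
qed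

lemma centered_log_concave_density_measure_scaleR_le:
  fixes f :: "'a::euclidean_space \<Rightarrow> real"
  assumes cld: "centered_log_concave_density f" and A: "A \<in> sets borel" and s: "1 \<le> s"
  defines "M \<equiv> density lborel (\<lambda>x. ennreal (f x))"
  shows "measure M ((\<lambda>x. s *\<^sub>R x) ` A) \<le> s ^ DIM('a) * exp (real DIM('a) * (s - 1)) * measure M A"
proof -
  interpret prob_space M
    unfolding M_def using centered_log_concave_density_prob_space[OF cld] .
  have lc: "log_concave_fun f" and [measurable]: "f \<in> borel_measurable borel"
    using cld by (auto simp: centered_log_concave_density_def)
  have "emeasure M ((\<lambda>x. s *\<^sub>R x) ` A) \<le> ennreal (s ^ DIM('a) * exp (real DIM('a) * (s - 1))) * emeasure M A"
    unfolding M_def using A s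
    by (intro emeasure_density_scaleR_le log_concave_fun_scaleR_le[OF lc _ s]
              centered_log_concave_density_le_exp_dim[OF cld]) auto
  then show ?thesis
    using s by (simp add: emeasure_eq_measure ennreal_mult[symmetric])
qed

lemma convex_subset_scaleR_image:
  fixes A :: "'a::real_vector set"
  assumes "convex A" "0 \<in> A" "1 \<le> s"
  shows "A \<subseteq> (\<lambda>x. s *\<^sub>R x) ` A"
proof
  fix a assume "a \<in> A"
  then have "(1 / s) *\<^sub>R a + (1 - 1 / s) *\<^sub>R 0 \<in> A"
    using assms by (intro convexD) auto
  moreover have "a = s *\<^sub>R ((1 / s) *\<^sub>R a + (1 - 1 / s) *\<^sub>R 0)" using assms(3) by simp
  ultimately show "a \<in> (\<lambda>x. s *\<^sub>R x) ` A" by blast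
qed

text \<open>\<open>a + e b = s ((1 / s) a + (e / (r s)) (r b))\<close> with \<open>s = 1 + e / r\<close> is \<open>s\<close> times a convex
  combination of \<open>a \<in> A\<close> and \<open>r b \<in> cball 0 r \<subseteq> A\<close>.\<close>
lemma convex_minkowski_ball_subset_scaleR_image:
  fixes A :: "'a::real_normed_vector set"
  assumes A: "convex A" "cball 0 r \<subseteq> A" and r: "0 < r" and e: "0 \<le> e"
  shows "{a + e *\<^sub>R b | a b. a \<in> A \<and> b \<in> cball 0 1} \<subseteq> (\<lambda>x. (1 + e / r) *\<^sub>R x) ` A"
proof clarify
  fix a b :: 'a
  assume a: "a \<in> A" and b: "b \<in> cball 0 1"
  define s where "s = 1 + e / r"
  have s: "1 \<le> s" using r e by (simp add: s_def)
  have "r *\<^sub>R b \<in> A" using b r A(2) by (auto simp: dist_norm)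
  moreover have "1 / s + e / (r * s) = (1 + e / r) / s"
    by (simp add: add_divide_distrib)
  then have "1 / s + e / (r * s) = 1"
    using s by (simp add: s_def)
  ultimately have "(1 / s) *\<^sub>R a + (e / (r * s)) *\<^sub>R (r *\<^sub>R b) \<in> A"
    using A(1) a r s e by (intro convexD) auto
  moreover have "a + e *\<^sub>R b = s *\<^sub>R ((1 / s) *\<^sub>R a + (e / (r * s)) *\<^sub>R (r *\<^sub>R b))"
    using r s by (simp add: scaleR_add_right)
  ultimately show "a + e *\<^sub>R b \<in> (\<lambda>x. (1 + e / r) *\<^sub>R x) ` A"
    unfolding s_def by blast
qed

lemma centered_log_concave_density_outer_parallel_le:
  fixes f :: "'a::euclidean_space \<Rightarrow> real"
  assumes cld: "centered_log_concave_density f"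
    and A: "convex A" "A \<in> sets borel" "cball 0 r \<subseteq> A" and r: "0 < r" and e: "0 < e"
  defines "M \<equiv> density lborel (\<lambda>x. ennreal (f x))"
  shows "measure M ({a + e *\<^sub>R b | a b. a \<in> A \<and> b \<in> cball 0 1} - A)
    \<le> ((1 + e / r) ^ DIM('a) * exp (real DIM('a) * (e / r)) - 1) * measure M A"
proof -
  interpret prob_space M
    unfolding M_def using centered_log_concave_density_prob_space[OF cld] .
  define S where "S = (\<lambda>x. (1 + e / r) *\<^sub>R x) ` A"
  have s: "1 \<le> 1 + e / r" using r e by simp
  have zero: "0 \<in> A" using A(3) r by auto
  have sets: "S \<in> sets M" "A \<in> sets M"
    using sets_borel_scaleR_image[OF A(2), of "1 + e / r"] s A(2) by (simp_all add: S_def M_def)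
  have "measure M ({a + e *\<^sub>R b | a b. a \<in> A \<and> b \<in> cball 0 1} - A) \<le> measure M (S - A)"
    using convex_minkowski_ball_subset_scaleR_image[OF A(1,3) r, of e] e sets
    by (intro finite_measure_mono) (auto simp: S_def simp del: mem_cball_0)
  also have "\<dots> = measure M S - measure M A"
    using convex_subset_scaleR_image[OF A(1) zero s] sets
    by (intro finite_measure_Diff) (auto simp: S_def)
  also have "\<dots> \<le> ((1 + e / r) ^ DIM('a) * exp (real DIM('a) * (e / r)) - 1) * measure M A"
    using centered_log_concave_density_measure_scaleR_le[OF cld A(2) s]
    by (simp add: S_def M_def algebra_simps)
  finally show ?thesis .
qed

lemma boundary_measure_le_derivative:
  assumes bound: "\<And>e. 0 < e \<Longrightarrow> measure M ({a + e *\<^sub>R b | a b. a \<in> A \<and> b \<in> cball 0 1} - A) \<le> Q e - Q 0"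
    and Q: "(Q has_real_derivative D) (at_right 0)"
  shows "boundary_measure M A \<le> ereal D"
proof -
  have "((\<lambda>e. ereal ((Q e - Q 0) / (e - 0))) \<longlongrightarrow> ereal D) (at_right 0)"
    using Q by (intro tendsto_ereal) (simp add: has_field_derivative_iff)
  then have lim: "Liminf (at_right 0) (\<lambda>e. ereal ((Q e - Q 0) / e)) = ereal D"
    by (intro lim_imp_Liminf) auto
  have "\<forall>\<^sub>F e in at_right 0. ereal (measure M ({a + e *\<^sub>R b | a b. a \<in> A \<and> b \<in> cball 0 1} - A) / e)
      \<le> ereal ((Q e - Q 0) / e)"
    using eventually_at_right_less[of 0]
  proof eventually_elim
    case (elim e)
    then show ?case using bound[OF elim] by (simp add: divide_right_mono)
  qed
  then have "boundary_measure M A \<le> Liminf (at_right 0) (\<lambda>e. ereal ((Q e - Q 0) / e))"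
    unfolding boundary_measure_def by (rule Liminf_mono)
  then show ?thesis using lim by simp
qed

theorem lemma4p3:
  fixes f :: "'a::euclidean_space \<Rightarrow> real" and A :: "'a set" and r :: real
  assumes "centered_log_concave_density f"
    and "convex_body A"
    and "r > 0" and "cball 0 r \<subseteq> A"
  shows "boundary_measure (density lborel (\<lambda>x. ennreal (f x))) A
         \<le> ereal (2 * real DIM('a) * measure (density lborel (\<lambda>x. ennreal (f x))) A / r)"
proof -
  define n where "n = real DIM('a)"
  define m where "m = measure (density lborel (\<lambda>x. ennreal (f x))) A"
  define Q where "Q e = ((1 + e / r) ^ DIM('a) * exp (n * (e / r))) * m" for e
  have "convex A" "A \<in> sets borel"
    using assms(2) by (auto simp: convex_body_def compact_imp_closed)
  then have "measure (density lborel (\<lambda>x. ennreal (f x)))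
      ({a + e *\<^sub>R b | a b. a \<in> A \<and> b \<in> cball 0 1} - A) \<le> Q e - Q 0" if "0 < e" for e
    using centered_log_concave_density_outer_parallel_le[OF assms(1) _ _ assms(4,3) that]
    by (simp add: Q_def n_def m_def algebra_simps)
  moreover have "(Q has_real_derivative (n / r + n / r) * m) (at 0)"
    unfolding Q_def using assms(3) by (auto intro!: derivative_eq_intros simp: n_def)
  then have "(Q has_real_derivative (n / r + n / r) * m) (at_right 0)"
    by (rule has_field_derivative_at_within)
  ultimately have "boundary_measure (density lborel (\<lambda>x. ennreal (f x))) A \<le> ereal ((n / r + n / r) * m)"
    by (rule boundary_measure_le_derivative)
  then show ?thesis
    by (simp add: n_def m_def field_simps)
qed

end
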